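(* For any test-fee structure $(G,\phi)$ with $\phi_d<0$ or $\phi_t<0$, there exists a test-fee structure $(G',\phi')$ with $\phi'_t\ge0$ and $\phi'_d\ge0$ such that $R(G,\phi)<R(G',\phi')$.
   Context: The asset value $\theta\sim F$ with support in $[\underline{\theta},\overline{\theta}]$ ($0\le\underline{\theta}<\overline{\theta}<\infty$ the extreme support points) and mean $\mu$. $\Gamma(F)$ is the set of mean-preserving contractions of $F$ (CDFs $G$ on $[\underline{\theta},\overline{\theta}]$ with $\int_{\underline{\theta}}^x G\le\int_{\underline{\theta}}^x F$ for all $x$, equality at $\overline{\theta}$), equivalently the score distributions of unbiased tests. A test-fee structure is $(G,\phi)$ with $G\in\Gamma(F)$, $\phi=(\phi_t,\phi_d)\in\mathbb{R}^2$. In the induced game the agent, not observing $\theta$, decides whether to pay $\phi_t$ to privately observe a score $s\sim G$, then whether to pay $\phi_d$ to verifiably disclose it to two buyers who otherwise see a null message; buyers bid in a first-price auction; the agent gets price minus fees. Equilibrium is perfect Bayesian equilibrium. With $\sigma_t$ the testing probability and $\sigma_d(s)$ the disclosure probability, the intermediary's revenue is $\sigma_t(\phi_t+\phi_d\int\sigma_d\,dG)$, and $R(G,\phi)$ is the infimum of this revenue over all equilibria. *)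

theory Defs
  imports "HOL-Probability.Probability"
begin

definition dist_on :: "real \<Rightarrow> real \<Rightarrow> real measure \<Rightarrow> bool" where
  "dist_on a b M \<longleftrightarrow> prob_space M \<and> sets M = sets borel \<and> measure M {a..b} = 1"

(* Standing assumptions on the asset-value distribution F:
   support in [a,b], 0 <= a < b, and a, b are the extreme support points. *)
definition asset_dist :: "real \<Rightarrow> real \<Rightarrow> real measure \<Rightarrow> bool" where
  "asset_dist a b F \<longleftrightarrow> 0 \<le> a \<and> a < b \<and> dist_on a b F \<and>
     (\<forall>e>0. measure F {a..<a+e} > 0 \<and> measure F {b-e<..b} > 0)"

(* Gamma(F): mean-preserving contractions of F (via the CDFs). *)
definition MPC :: "real \<Rightarrow> real \<Rightarrow> real measure \<Rightarrow> real measure \<Rightarrow> bool" where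
  "MPC a b F G \<longleftrightarrow> dist_on a b G \<and>
     (\<forall>x\<in>{a..b}. integral {a..x} (cdf G) \<le> integral {a..x} (cdf F)) \<and>
     integral {a..b} (cdf G) = integral {a..b} (cdf F)"

(* Perfect Bayesian equilibrium of the induced game, in reduced form:
   st = testing probability, sd = disclosure strategy (score -> probability),
   beta = the price (buyers' posterior mean) after the null message.
   A disclosed score s yields price s (unbiased test; two-buyer first-price
   auction with common value yields price = posterior mean). *)
definition equilibrium ::
  "real \<Rightarrow> real \<Rightarrow> real measure \<Rightarrow> real measure \<Rightarrow> real \<Rightarrow> real \<Rightarrow>
   real \<Rightarrow> (real \<Rightarrow> real) \<Rightarrow> real \<Rightarrow> bool" where
  "equilibrium a b F G pt pd st sd beta \<longleftrightarrow>
     st \<in> {0..1} \<and> sd \<in> borel_measurable borel \<and> (\<forall>s. sd s \<in> {0..1}) \<and>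
     (\<forall>s. s - pd > beta \<longrightarrow> sd s = 1) \<and>
     (\<forall>s. s - pd < beta \<longrightarrow> sd s = 0) \<and>
     (let VT = - pt + (\<integral>s. sd s * (s - pd) + (1 - sd s) * beta \<partial>G) in
        (st > 0 \<longrightarrow> VT \<ge> beta) \<and> (st < 1 \<longrightarrow> VT \<le> beta)) \<and>
     beta \<in> {a..b} \<and>
     (let pn = (1 - st) + st * (\<integral>s. 1 - sd s \<partial>G) in
        pn > 0 \<longrightarrow>
        beta = ((1 - st) * (\<integral>x. x \<partial>F) + st * (\<integral>s. s * (1 - sd s) \<partial>G)) / pn)"

definition revenue :: "real measure \<Rightarrow> real \<Rightarrow> real \<Rightarrow> real \<Rightarrow> (real \<Rightarrow> real) \<Rightarrow> real" where
  "revenue G pt pd st sd = st * (pt + pd * (\<integral>s. sd s \<partial>G))"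

definition R :: "real \<Rightarrow> real \<Rightarrow> real measure \<Rightarrow> real measure \<Rightarrow> real \<Rightarrow> real \<Rightarrow> real" where
  "R a b F G pt pd = Inf {revenue G pt pd st sd | st sd beta. equilibrium a b F G pt pd st sd beta}"

end

theory Submission
  imports Defs
begin

text \<open>
  Write \<open>option_value G c\<close> for \<open>E\<^sub>G (s - c)\<^sup>+\<close> and \<open>\<mu>\<close> for the mean of \<open>F\<close>, shared by every
  \<open>G \<in> \<Gamma>(F)\<close>. Against a null price \<open>\<beta>\<close>, the gain from testing is \<open>option_value G (\<beta> + \<phi>\<^sub>d)\<close>.
  A pure test fee \<open>0 < c < option_value H \<mu>\<close> yields revenue \<open>c\<close> in every equilibrium: uncertain
  testing would force \<open>\<beta> > \<mu>\<close>, which Bayes' rule excludes. With \<open>H = F\<close> or \<open>H = G\<close> it therefore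
  suffices to find an equilibrium of \<open>(G, \<phi>)\<close> with revenue \<open>\<le> 0\<close> or below \<open>option_value G \<mu>\<close>.
  If \<open>\<phi>\<^sub>d < 0\<close>, there is one without testing (revenue 0) or one with testing and full
  disclosure (revenue \<open>\<phi>\<^sub>t + \<phi>\<^sub>d\<close>). If \<open>\<phi>\<^sub>d \<ge> 0 > \<phi>\<^sub>t\<close>, either nothing is ever disclosed
  (revenue \<open>\<phi>\<^sub>t\<close>), or every equilibrium of \<open>(G, 0, \<phi>\<^sub>d)\<close> has certain testing and stays one
  when \<open>\<phi>\<^sub>t\<close> is charged, so \<open>R(G, \<phi>) \<le> R(G, 0, \<phi>\<^sub>d) + \<phi>\<^sub>t\<close>. Such equilibria exist by an
  intermediate value argument for the disclosure cutoff, whose belief defect only jumps upward.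
\<close>

lemma dist_on_real_distribution: "dist_on a b M \<Longrightarrow> real_distribution M"
  by (simp add: dist_on_def real_distribution_def real_distribution_axioms_def)

lemma dist_on_le: "dist_on a b M \<Longrightarrow> a \<le> b"
  by (cases "a \<le> b") (auto simp: dist_on_def)

lemma AE_dist_on: "dist_on a b M \<Longrightarrow> AE x in M. x \<in> {a..b}"
  unfolding dist_on_def by (metis prob_space.AE_prob_1)

lemma integrable_dist_on:
  fixes f :: "real \<Rightarrow> real"
  assumes "dist_on a b M" "f \<in> borel_measurable borel" "\<And>x. x \<in> {a..b} \<Longrightarrow> \<bar>f x\<bar> \<le> C"
  shows "integrable M f"
proof -
  interpret real_distribution M using assms(1) by (rule dist_on_real_distribution)
  show ?thesis
    using AE_dist_on[OF assms(1)] assms(2,3) by (intro integrable_const_bound[where B = C]) auto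
qed

lemma integrable_dist_on_id: "dist_on a b M \<Longrightarrow> integrable M (\<lambda>x. x)"
  by (rule integrable_dist_on[where C = "\<bar>a\<bar> + \<bar>b\<bar>"]) auto

lemma mean_dist_on: assumes "dist_on a b M" shows "(\<integral>x. x \<partial>M) \<in> {a..b}"
proof -
  interpret real_distribution M using assms by (rule dist_on_real_distribution)
  show ?thesis
    using AE_dist_on[OF assms] integrable_dist_on_id[OF assms]
    by (auto intro!: integral_ge_const integral_le_const)
qed

lemma integral_cdf_dist_on:
  assumes M: "dist_on a b M"
  shows "integral {a..b} (cdf M) = b - (\<integral>x. x \<partial>M)"
proof -
  interpret real_distribution M using M by (rule dist_on_real_distribution)
  interpret pair_sigma_finite M lborel ..
  have [measurable]: "cdf M \<in> borel_measurable borel"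
    by (rule borel_measurable_mono) (simp add: mono_def cdf_nondecreasing)
  define g :: "real \<times> real \<Rightarrow> ennreal" where
    "g z = indicator {a..b} (snd z) * indicator {z. fst z \<le> snd z} z" for z
  have [measurable]: "g \<in> borel_measurable (M \<Otimes>\<^sub>M lborel)"
    unfolding g_def by measurable
  have "(\<integral>\<^sup>+ x. ennreal (indicator {a..b} x * cdf M x) \<partial>lborel)
      = (\<integral>\<^sup>+ x. (\<integral>\<^sup>+ s. g (s, x) \<partial>M) \<partial>lborel)"
  proof (intro nn_integral_cong)
    fix x
    have "(\<lambda>s. g (s, x)) = (\<lambda>s. indicator {a..b} x * indicator {..x} s)"
      by (auto simp: g_def fun_eq_iff split: split_indicator)
    then show "ennreal (indicator {a..b} x * cdf M x) = (\<integral>\<^sup>+ s. g (s, x) \<partial>M)"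
      by (simp add: nn_integral_cmult cdf_def emeasure_eq_measure ennreal_mult' ennreal_indicator)
  qed
  also have "\<dots> = (\<integral>\<^sup>+ s. (\<integral>\<^sup>+ x. g (s, x) \<partial>lborel) \<partial>M)"
    by (rule Fubini) measurable
  also have "\<dots> = (\<integral>\<^sup>+ s. ennreal (b - s) \<partial>M)"
  proof (intro nn_integral_cong_AE, use AE_dist_on[OF M] in eventually_elim)
    case (elim s)
    then have "(\<lambda>x. g (s, x)) = indicator {s..b}"
      by (auto simp: g_def fun_eq_iff split: split_indicator)
    then show ?case using elim by simp
  qed
  also have "\<dots> = ennreal (b - (\<integral>x. x \<partial>M))"
    using AE_dist_on[OF M] integrable_dist_on_id[OF M]
    by (subst nn_integral_eq_integral) (auto simp: prob_space[simplified])
  finally have "((\<lambda>x. indicator {a..b} x * cdf M x) has_integral (b - (\<integral>x. x \<partial>M))) UNIV"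
    using mean_dist_on[OF M] by (intro nn_integral_has_integral) (auto simp: cdf_nonneg)
  moreover have "(\<lambda>x. indicator {a..b} x * cdf M x) = (\<lambda>x. if x \<in> {a..b} then cdf M x else 0)"
    by (auto simp: fun_eq_iff)
  ultimately show ?thesis
    by (metis has_integral_restrict_UNIV integral_unique)
qed

lemma MPC_mean:
  assumes "dist_on a b F" "MPC a b F G"
  shows "(\<integral>x. x \<partial>G) = (\<integral>x. x \<partial>F)"
  using assms integral_cdf_dist_on[of a b F] integral_cdf_dist_on[of a b G] by (simp add: MPC_def)

lemma MPC_refl: "dist_on a b F \<Longrightarrow> MPC a b F F"
  by (simp add: MPC_def)

definition option_value :: "real measure \<Rightarrow> real \<Rightarrow> real" where
  "option_value M c = (\<integral>s. max (s - c) 0 \<partial>M)"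

lemma integrable_option_payoff: "dist_on a b M \<Longrightarrow> integrable M (\<lambda>s. max (s - c) 0)"
  by (rule integrable_dist_on[where C = "\<bar>a\<bar> + \<bar>b\<bar> + \<bar>c\<bar>"]) auto

lemma option_value_nonneg: "0 \<le> option_value M c"
  unfolding option_value_def by (rule integral_nonneg_AE) auto

lemma option_value_antimono:
  "dist_on a b M \<Longrightarrow> c \<le> d \<Longrightarrow> option_value M d \<le> option_value M c"
  unfolding option_value_def by (intro integral_mono integrable_option_payoff) auto

lemma option_value_le_add_diff:
  assumes M: "dist_on a b M" and "c \<le> d"
  shows "option_value M c \<le> option_value M d + (d - c)"
proof -
  interpret real_distribution M using M by (rule dist_on_real_distribution)
  have "option_value M c \<le> (\<integral>s. max (s - d) 0 + (d - c) \<partial>M)"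
    unfolding option_value_def using integrable_option_payoff[OF M] \<open>c \<le> d\<close>
    by (intro integral_mono) auto
  then show ?thesis
    using integrable_option_payoff[OF M] by (simp add: option_value_def prob_space[simplified])
qed

lemma AE_le_if_option_value_eq_0:
  assumes "dist_on a b M" "option_value M c = 0"
  shows "AE s in M. s \<le> c"
proof -
  have "AE s in M. max (s - c) 0 = 0"
    using assms integrable_option_payoff[OF assms(1)]
    by (subst integral_nonneg_eq_0_iff_AE[symmetric]) (auto simp: option_value_def)
  then show ?thesis by eventually_elim simp
qed

lemma option_value_mean_pos:
  assumes "asset_dist a b F"
  shows "0 < option_value F (\<integral>x. x \<partial>F)"
proof (rule ccontr)
  define \<mu> where "\<mu> = (\<integral>x. x \<partial>F)"
  define e where "e = (b - a) / 2"
  have F: "dist_on a b F" and "0 < e"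
    and tails: "0 < measure F {a..<a + e}" "0 < measure F {b - e<..b}"
    using assms by (auto simp: asset_dist_def e_def)
  interpret real_distribution F using F by (rule dist_on_real_distribution)
  assume "\<not> 0 < option_value F \<mu>"
  then have "AE x in F. x \<le> \<mu>"
    using option_value_nonneg[of F \<mu>] by (intro AE_le_if_option_value_eq_0[OF F]) simp
  moreover have "(\<integral>x. \<mu> - x \<partial>F) = 0"
    using integrable_dist_on_id[OF F] by (simp add: \<mu>_def prob_space[simplified])
  ultimately have "AE x in F. \<mu> - x = 0"
    using integrable_dist_on_id[OF F] by (subst (asm) integral_nonneg_eq_0_iff_AE) auto
  then have concentrated: "measure F A = 0" if "\<mu> \<notin> A" "A \<in> sets borel" for A
  proof -
    have "AE x in F. x \<in> A \<longleftrightarrow> x \<in> {}"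
      using \<open>AE x in F. \<mu> - x = 0\<close> by eventually_elim (use that in auto)
    then show ?thesis using that by (simp add: measure_eq_AE[of A "{}" F])
  qed
  have "\<mu> \<notin> {a..<a + e} \<or> \<mu> \<notin> {b - e<..b}"
    by (auto simp: e_def field_simps)
  then show False
    using tails concentrated by fastforce
qed

lemma integrable_bounded_mult:
  fixes f g :: "real \<Rightarrow> real"
  assumes "sets M = sets borel" "integrable M f" "g \<in> borel_measurable borel" "\<And>s. \<bar>g s\<bar> \<le> 1"
  shows "integrable M (\<lambda>s. g s * f s)"
proof (rule Bochner_Integration.integrable_bound[OF assms(2)])
  show "(\<lambda>s. g s * f s) \<in> borel_measurable M"
    using assms(1-3) by (simp add: measurable_cong_sets[OF assms(1) refl])
  show "AE s in M. norm (g s * f s) \<le> norm (f s)"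
    using assms(4) by (intro AE_I2) (simp add: abs_mult mult_left_le_one_le)
qed

lemma set_integrable_dist_on_diff:
  assumes M: "dist_on a b M" and "A \<in> sets borel"
  shows "set_integrable M A (\<lambda>s. s - c)"
proof -
  interpret real_distribution M using M by (rule dist_on_real_distribution)
  show ?thesis
    unfolding set_integrable_def using \<open>A \<in> sets borel\<close> integrable_dist_on_id[OF M]
    by (intro integrable_mult_indicator) auto
qed

lemma set_integral_dist_on_diff:
  assumes M: "dist_on a b M" and "A \<in> sets borel"
  shows "(LINT s:A|M. s - c) = (LINT s:A|M. s) - c * measure M A"
proof -
  interpret real_distribution M using M by (rule dist_on_real_distribution)
  have "set_integrable M A (\<lambda>s. s)" "set_integrable M A (\<lambda>_. c)"
    using set_integrable_dist_on_diff[OF M \<open>A \<in> sets borel\<close>, of 0] \<open>A \<in> sets borel\<close>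
    by (auto simp: set_integrable_def less_top[symmetric])
  then show ?thesis
    using \<open>A \<in> sets borel\<close> by (simp add: set_integral_const)
qed

lemma set_integral_atMost_eq_lessThan:
  assumes G: "dist_on a b G"
  shows "(LINT s:{..t}|G. s - c) = (LINT s:{..<t}|G. s - c) + (t - c) * measure G {t}"
proof -
  interpret real_distribution G using G by (rule dist_on_real_distribution)
  have "{..t} = {..<t} \<union> {t}"
    by auto
  then have "(LINT s:{..t}|G. s - c) = (LINT s:{..<t}|G. s - c) + (LINT s:{t}|G. s - c)"
    using set_integrable_dist_on_diff[OF G] by (simp only:) (rule set_integral_Un; simp)
  also have "(LINT s:{t}|G. s - c) = (LINT s:{t}|G. t - c)"
    unfolding set_lebesgue_integral_def
    by (intro Bochner_Integration.integral_cong) (auto split: split_indicator)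
  finally show ?thesis
    by (simp add: set_integral_const)
qed

lemma IVT_upward_jumps:
  fixes U L :: "real \<Rightarrow> real"
  assumes "x \<le> y" and "0 \<le> U x" and "L y \<le> 0"
    and jump: "\<And>t. L t \<le> U t"
    and left: "\<And>t. (U \<longlongrightarrow> L t) (at_left t)"
    and right: "\<And>t. (U \<longlongrightarrow> U t) (at_right t)"
  shows "\<exists>t\<in>{x..y}. L t \<le> 0 \<and> 0 \<le> U t"
proof -
  define S where "S = {t \<in> {x..y}. 0 \<le> U t}"
  define t where "t = Sup S"
  have "x \<in> S" and bdd: "bdd_above S"
    using assms(1,2) by (auto simp: S_def intro: bdd_aboveI[of _ y])
  then have "x \<le> t" "t \<le> y"
    unfolding t_def by (auto intro: cSup_upper cSup_least simp: S_def)
  have "0 \<le> U t"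
  proof (rule ccontr)
    assume "\<not> 0 \<le> U t"
    then have "\<forall>\<^sub>F s in at_left t. U s < 0"
      using jump[of t] by (intro order_tendstoD(2)[OF left]) simp
    then obtain l where "l < t" and neg: "\<And>s. l < s \<Longrightarrow> s < t \<Longrightarrow> U s < 0"
      by (auto simp: eventually_at_left_field)
    have "max l x < t"
      using \<open>l < t\<close> \<open>x \<le> t\<close> \<open>0 \<le> U x\<close> \<open>\<not> 0 \<le> U t\<close> by (cases "x = t") auto
    then obtain s where "s \<in> S" "max l x < s"
      using less_cSupD[of S] \<open>x \<in> S\<close> unfolding t_def by blast
    moreover have "s \<le> t"
      unfolding t_def using \<open>s \<in> S\<close> bdd by (rule cSup_upper)
    ultimately show False
      using neg[of s] \<open>\<not> 0 \<le> U t\<close> by (cases "s = t") (auto simp: S_def)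
  qed
  moreover have "L t \<le> 0"
  proof (rule ccontr)
    assume "\<not> L t \<le> 0"
    then have "t < y"
      using \<open>t \<le> y\<close> \<open>L y \<le> 0\<close> by (cases "t = y") auto
    have "\<forall>\<^sub>F s in at_right t. 0 < U s"
      using jump[of t] \<open>\<not> L t \<le> 0\<close> by (intro order_tendstoD(1)[OF right]) simp
    then obtain r where "t < r" and pos: "\<And>s. t < s \<Longrightarrow> s < r \<Longrightarrow> 0 < U s"
      by (auto simp: eventually_at_right_field)
    define s where "s = (t + min r y) / 2"
    have "t < s" "s < r" "s \<le> y"
      using \<open>t < r\<close> \<open>t < y\<close> by (auto simp: s_def)
    then have "s \<in> S"
      using pos[of s] \<open>x \<le> t\<close> by (simp add: S_def)
    then have "s \<le> t"
      unfolding t_def using bdd by (rule cSup_upper)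
    then show False
      using \<open>t < s\<close> by simp
  qed
  ultimately show ?thesis
    using \<open>x \<le> t\<close> \<open>t \<le> y\<close> by auto
qed

lemma tendsto_set_integral_atMost_at_left:
  fixes f :: "real \<Rightarrow> 'b::{banach, second_countable_topology}"
  assumes "sets M = sets borel" and "integrable M f"
  shows "((\<lambda>t. LINT x:{..t}|M. f x) \<longlongrightarrow> (LINT x:{..<t0}|M. f x)) (at_left t0)"
proof (rule tendsto_at_left_sequentially[of "t0 - 1"])
  fix S :: "nat \<Rightarrow> real"
  assume S: "\<And>n. S n < t0" "incseq S" "S \<longlonglongrightarrow> t0"
  have "(\<Union>n. {..S n}) = {..<t0}"
  proof safe
    fix x assume "x < t0"
    then obtain N where "\<forall>n\<ge>N. x < S n"
      using order_tendstoD(1)[OF \<open>S \<longlonglongrightarrow> t0\<close>] by (auto simp: eventually_sequentially)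
    then show "x \<in> (\<Union>n. {..S n})"
      by (auto intro!: less_imp_le)
  qed (use S(1) le_less_trans in blast)
  moreover have "(\<lambda>n. LINT x:{..S n}|M. f x) \<longlonglongrightarrow> (LINT x:(\<Union>n. {..S n})|M. f x)"
    using assms S(2)
    by (intro set_integral_cont_up)
       (auto simp: incseq_def set_integrable_def integrable_mult_indicator)
  ultimately show "(\<lambda>n. LINT x:{..S n}|M. f x) \<longlonglongrightarrow> (LINT x:{..<t0}|M. f x)"
    by simp
qed simp

lemma tendsto_set_integral_atMost_at_right:
  fixes f :: "real \<Rightarrow> 'b::{banach, second_countable_topology}"
  assumes "sets M = sets borel" and "integrable M f"
  shows "((\<lambda>t. LINT x:{..t}|M. f x) \<longlongrightarrow> (LINT x:{..t0}|M. f x)) (at_right t0)"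
proof (rule tendsto_at_right_sequentially[of t0 "t0 + 1"])
  fix S :: "nat \<Rightarrow> real"
  assume S: "\<And>n. t0 < S n" "decseq S" "S \<longlonglongrightarrow> t0"
  have "(\<Inter>n. {..S n}) = {..t0}"
  proof safe
    fix x assume "x \<in> (\<Inter>n. {..S n})"
    then have "\<And>n. x \<le> S n" by auto
    then show "x \<le> t0"
      using \<open>S \<longlonglongrightarrow> t0\<close> by (intro LIMSEQ_le_const) auto
  qed (use S(1) less_imp_le order_trans in blast)
  moreover have "(\<lambda>n. LINT x:{..S n}|M. f x) \<longlonglongrightarrow> (LINT x:(\<Inter>n. {..S n})|M. f x)"
    using assms S(2)
    by (intro set_integral_cont_down)
       (auto simp: decseq_def set_integrable_def integrable_mult_indicator)
  ultimately show "(\<lambda>n. LINT x:{..S n}|M. f x) \<longlonglongrightarrow> (LINT x:{..t0}|M. f x)"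
    by simp
qed simp

definition disclosure_rule :: "real \<Rightarrow> real \<Rightarrow> (real \<Rightarrow> real) \<Rightarrow> bool" where
  "disclosure_rule pd beta sd \<longleftrightarrow> sd \<in> borel_measurable borel \<and> (\<forall>s. sd s \<in> {0..1}) \<and>
     (\<forall>s. s - pd > beta \<longrightarrow> sd s = 1) \<and> (\<forall>s. s - pd < beta \<longrightarrow> sd s = 0)"

lemma disclosure_payoff:
  assumes G: "dist_on a b G" and "disclosure_rule pd beta sd"
  shows "(\<integral>s. sd s * (s - pd) + (1 - sd s) * beta \<partial>G) = beta + option_value G (beta + pd)"
proof -
  interpret real_distribution G using G by (rule dist_on_real_distribution)
  have "sd s * (s - pd) + (1 - sd s) * beta = beta + max (s - (beta + pd)) 0" for s
    using assms(2)
    by (cases "s - pd" beta rule: linorder_cases) (auto simp: disclosure_rule_def algebra_simps)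
  then show ?thesis
    using integrable_option_payoff[OF G] by (simp add: option_value_def prob_space[simplified])
qed

text \<open>Bayes' rule for the null price, cleared of the probability of the null message.\<close>

lemma null_price_iff:
  assumes G: "dist_on a b G" and rule: "disclosure_rule pd beta sd"
    and pn: "0 < 1 - st + st * (\<integral>s. 1 - sd s \<partial>G)"
  shows "beta = ((1 - st) * \<mu> + st * (\<integral>s. s * (1 - sd s) \<partial>G))
      / (1 - st + st * (\<integral>s. 1 - sd s \<partial>G))
    \<longleftrightarrow> (1 - st) * (beta - \<mu>) = st * (\<integral>s. (1 - sd s) * (s - beta) \<partial>G)"
proof -
  interpret real_distribution G using G by (rule dist_on_real_distribution)
  define I J where "I = (\<integral>s. 1 - sd s \<partial>G)" and "J = (\<integral>s. s * (1 - sd s) \<partial>G)"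
  have [measurable]: "sd \<in> borel_measurable borel" and "\<And>s. \<bar>1 - sd s\<bar> \<le> 1"
    using rule by (auto simp: disclosure_rule_def)
  then have "integrable G (\<lambda>s. (1 - sd s) * s)" "integrable G (\<lambda>s. (1 - sd s) * 1)"
    by (intro integrable_bounded_mult[OF events_eq_borel] integrable_dist_on_id[OF G]; simp)+
  then have "(\<integral>s. (1 - sd s) * s - beta * ((1 - sd s) * 1) \<partial>G)
      = (\<integral>s. (1 - sd s) * s \<partial>G) - beta * (\<integral>s. (1 - sd s) * 1 \<partial>G)"
    by (subst Bochner_Integration.integral_diff) auto
  then have nondisclosed: "(\<integral>s. (1 - sd s) * (s - beta) \<partial>G) = J - beta * I"
    by (simp add: I_def J_def algebra_simps)
  have "beta = ((1 - st) * \<mu> + st * J) / (1 - st + st * I)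
      \<longleftrightarrow> beta * (1 - st + st * I) - ((1 - st) * \<mu> + st * J) = 0"
    using pn by (simp add: I_def eq_divide_eq)
  also have "beta * (1 - st + st * I) - ((1 - st) * \<mu> + st * J)
      = (1 - st) * (beta - \<mu>) - st * (J - beta * I)"
    by (simp add: algebra_simps)
  finally show ?thesis
    by (simp add: I_def J_def nondisclosed)
qed

lemma equilibrium_iff:
  assumes G: "dist_on a b G"
  shows "equilibrium a b F G pt pd st sd beta \<longleftrightarrow>
     st \<in> {0..1} \<and> disclosure_rule pd beta sd \<and> beta \<in> {a..b} \<and>
     (0 < st \<longrightarrow> pt \<le> option_value G (beta + pd)) \<and>
     (st < 1 \<longrightarrow> option_value G (beta + pd) \<le> pt) \<and>
     (0 < 1 - st + st * (\<integral>s. 1 - sd s \<partial>G) \<longrightarrow>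
        (1 - st) * (beta - (\<integral>x. x \<partial>F)) = st * (\<integral>s. (1 - sd s) * (s - beta) \<partial>G))"
proof -
  have reordered: "equilibrium a b F G pt pd st sd beta \<longleftrightarrow>
     st \<in> {0..1} \<and> disclosure_rule pd beta sd \<and> beta \<in> {a..b} \<and>
     (0 < st \<longrightarrow> beta \<le> - pt + (\<integral>s. sd s * (s - pd) + (1 - sd s) * beta \<partial>G)) \<and>
     (st < 1 \<longrightarrow> - pt + (\<integral>s. sd s * (s - pd) + (1 - sd s) * beta \<partial>G) \<le> beta) \<and>
     (0 < 1 - st + st * (\<integral>s. 1 - sd s \<partial>G) \<longrightarrow>
        beta = ((1 - st) * (\<integral>x. x \<partial>F) + st * (\<integral>s. s * (1 - sd s) \<partial>G))
          / (1 - st + st * (\<integral>s. 1 - sd s \<partial>G)))"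
    unfolding equilibrium_def Let_def disclosure_rule_def by blast
  show ?thesis
  proof (cases "disclosure_rule pd beta sd")
    case True
    have "beta \<le> - pt + (\<integral>s. sd s * (s - pd) + (1 - sd s) * beta \<partial>G) \<longleftrightarrow>
        pt \<le> option_value G (beta + pd)"
      "- pt + (\<integral>s. sd s * (s - pd) + (1 - sd s) * beta \<partial>G) \<le> beta \<longleftrightarrow>
        option_value G (beta + pd) \<le> pt"
      using disclosure_payoff[OF G True] by linarith+
    moreover have "(0 < 1 - st + st * (\<integral>s. 1 - sd s \<partial>G) \<longrightarrow>
        beta = ((1 - st) * (\<integral>x. x \<partial>F) + st * (\<integral>s. s * (1 - sd s) \<partial>G))
          / (1 - st + st * (\<integral>s. 1 - sd s \<partial>G))) \<longleftrightarrow>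
      (0 < 1 - st + st * (\<integral>s. 1 - sd s \<partial>G) \<longrightarrow>
        (1 - st) * (beta - (\<integral>x. x \<partial>F)) = st * (\<integral>s. (1 - sd s) * (s - beta) \<partial>G))"
      using null_price_iff[OF G True] by blast
    ultimately show ?thesis
      unfolding reordered by (simp only:)
  next
    case False
    then show ?thesis
      unfolding reordered by blast
  qed
qed

lemma integral_nondisclosed_le:
  assumes G: "dist_on a b G" and rule: "disclosure_rule pd beta sd" and "0 \<le> pd"
  shows "(\<integral>s. (1 - sd s) * (s - beta) \<partial>G) \<le> (\<integral>s. s \<partial>G) - beta"
proof -
  interpret real_distribution G using G by (rule dist_on_real_distribution)
  have [measurable]: "sd \<in> borel_measurable borel" and sd01: "\<And>s. sd s \<in> {0..1}"
    using rule by (auto simp: disclosure_rule_def)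
  have "integrable G (\<lambda>s. s - beta)"
    using integrable_dist_on_id[OF G] by simp
  moreover have "(1 - sd s) * (s - beta) \<le> s - beta" for s
  proof (cases "s - pd < beta")
    case True
    then show ?thesis using rule by (simp add: disclosure_rule_def)
  next
    case False
    then show ?thesis
      using sd01[of s] \<open>0 \<le> pd\<close> mult_right_mono[of beta s "sd s"] by (simp add: algebra_simps)
  qed
  ultimately have "(\<integral>s. (1 - sd s) * (s - beta) \<partial>G) \<le> (\<integral>s. s - beta \<partial>G)"
    using sd01 by (intro integral_mono integrable_bounded_mult[OF events_eq_borel]) auto
  then show ?thesis
    using integrable_dist_on_id[OF G] by (simp add: prob_space[simplified])
qed

text \<open>
  Uncertain testing would make \<open>option_value G (beta + pd) \<le> pt\<close>, forcing \<open>beta > \<mu>\<close>; but with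
  \<open>pd \<ge> 0\<close> only scores \<open>\<ge> beta\<close> are disclosed, so Bayes' rule keeps \<open>beta \<le> \<mu>\<close>.
\<close>

lemma equilibrium_full_testing:
  assumes G: "dist_on a b G" and mean: "(\<integral>x. x \<partial>G) = (\<integral>x. x \<partial>F)" and "0 \<le> pd"
    and fee: "pt < option_value G ((\<integral>x. x \<partial>F) + pd)"
    and eq: "equilibrium a b F G pt pd st sd beta"
  shows "st = 1"
proof (rule ccontr)
  define \<mu> where "\<mu> = (\<integral>x. x \<partial>F)"
  assume "st \<noteq> 1"
  with eq have st: "0 \<le> st" "st < 1" and rule: "disclosure_rule pd beta sd"
    and "option_value G (beta + pd) \<le> pt"
    and belief: "0 < 1 - st + st * (\<integral>s. 1 - sd s \<partial>G) \<Longrightarrow>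
      (1 - st) * (beta - \<mu>) = st * (\<integral>s. (1 - sd s) * (s - beta) \<partial>G)"
    unfolding equilibrium_iff[OF G] \<mu>_def by auto
  have "\<mu> < beta"
  proof (rule ccontr)
    assume "\<not> \<mu> < beta"
    then have "option_value G (\<mu> + pd) \<le> option_value G (beta + pd)"
      by (intro option_value_antimono[OF G]) simp
    then show False
      using fee \<open>option_value G (beta + pd) \<le> pt\<close> unfolding \<mu>_def by linarith
  qed
  have "0 \<le> (\<integral>s. 1 - sd s \<partial>G)"
    using rule by (intro integral_nonneg_AE) (auto simp: disclosure_rule_def)
  then have "(1 - st) * (beta - \<mu>) = st * (\<integral>s. (1 - sd s) * (s - beta) \<partial>G)"
    using st by (intro belief) (simp add: add_pos_nonneg)
  also have "\<dots> \<le> st * (\<mu> - beta)"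
    using integral_nondisclosed_le[OF G rule \<open>0 \<le> pd\<close>] st mean
    by (intro mult_left_mono) (auto simp: \<mu>_def)
  finally have "(1 - st) * (beta - \<mu>) \<le> st * (\<mu> - beta)" .
  moreover have "0 < (1 - st) * (beta - \<mu>)" "st * (\<mu> - beta) \<le> 0"
    using st \<open>\<mu> < beta\<close> by (simp_all add: mult_nonneg_nonpos)
  ultimately show False
    by linarith
qed

text \<open>
  Here \<open>t\<close> is the disclosure cutoff \<open>beta + pd\<close>; the two integrals are the defect of the null
  price when the scores at the atom \<open>t\<close> are all disclosed, resp. all concealed.
\<close>

lemma exists_indifferent_cutoff:
  assumes G: "dist_on a b G" and "0 \<le> pd"
  shows "\<exists>t\<in>{a + pd..b + pd}.
    (LINT s:{..<t}|G. s - (t - pd)) \<le> 0 \<and> 0 \<le> (LINT s:{..t}|G. s - (t - pd))"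
proof -
  interpret real_distribution G using G by (rule dist_on_real_distribution)
  define U where "U t = (LINT s:{..t}|G. s - (t - pd))" for t
  define L where "L t = (LINT s:{..<t}|G. s - (t - pd))" for t
  have U_eq: "U t = (LINT s:{..t}|G. s) - (t - pd) * cdf G t" for t
    unfolding U_def cdf_def by (simp add: set_integral_dist_on_diff[OF G])
  have L_eq: "L t = (LINT s:{..<t}|G. s) - (t - pd) * measure G {..<t}" for t
    unfolding L_def by (simp add: set_integral_dist_on_diff[OF G])
  have "(U \<longlongrightarrow> L t) (at_left t)" for t
    unfolding U_eq[abs_def] L_eq
    by (intro tendsto_intros tendsto_set_integral_atMost_at_left cdf_at_left
        integrable_dist_on_id[OF G]) simp
  moreover have "(U \<longlongrightarrow> U t) (at_right t)" for t
    using cdf_is_right_cont[of t] unfolding U_eq[abs_def] U_eq[of t] continuous_within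
    by (intro tendsto_intros tendsto_set_integral_atMost_at_right integrable_dist_on_id[OF G])
       simp_all
  moreover have "L t \<le> U t" for t
    using set_integral_atMost_eq_lessThan[OF G, of t "t - pd"] \<open>0 \<le> pd\<close> by (simp add: U_def L_def)
  moreover have "0 \<le> U (a + pd)"
    unfolding U_def set_lebesgue_integral_def using AE_dist_on[OF G]
    by (intro integral_nonneg_AE) (auto split: split_indicator elim: eventually_mono)
  moreover have "L (b + pd) \<le> 0"
  proof -
    have "0 \<le> (\<integral>s. - (indicator {..<b + pd} s * (s - b)) \<partial>G)"
      using AE_dist_on[OF G]
      by (intro integral_nonneg_AE) (auto split: split_indicator elim: eventually_mono)
    then show ?thesis
      unfolding L_def set_lebesgue_integral_def by simp
  qed
  ultimately show ?thesis
    using IVT_upward_jumps[of "a + pd" "b + pd" U L] dist_on_le[OF G] unfolding U_def L_def by auto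
qed

lemma disclosure_fixed_point:
  assumes G: "dist_on a b G" and "0 \<le> pd"
  shows "\<exists>beta sd. beta \<in> {a..b} \<and> disclosure_rule pd beta sd \<and>
    (\<integral>s. (1 - sd s) * (s - beta) \<partial>G) = 0"
proof -
  interpret real_distribution G using G by (rule dist_on_real_distribution)
  obtain t where t: "t \<in> {a + pd..b + pd}"
    and L: "(LINT s:{..<t}|G. s - (t - pd)) \<le> 0" and U: "0 \<le> (LINT s:{..t}|G. s - (t - pd))"
    using exists_indifferent_cutoff[OF G \<open>0 \<le> pd\<close>] by blast
  define L' where "L' = (LINT s:{..<t}|G. s - (t - pd))"
  define m where "m = pd * measure G {t}"
  have "0 \<le> L' + m"
    using U set_integral_atMost_eq_lessThan[OF G, of t "t - pd"] by (simp add: L'_def m_def)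
  define q where "q = (if m = 0 then 1 else 1 + L' / m)"
  have "0 \<le> m"
    using \<open>0 \<le> pd\<close> by (simp add: m_def)
  then have q: "q \<in> {0..1}" and balance: "L' + (1 - q) * m = 0"
    using L \<open>0 \<le> L' + m\<close> by (auto simp: q_def L'_def field_simps)
  define sd where "sd s = (if t < s then 1 else if s = t then q else 0)" for s
  have "disclosure_rule pd (t - pd) sd"
    using q unfolding disclosure_rule_def sd_def by auto
  moreover have "(\<integral>s. (1 - sd s) * (s - (t - pd)) \<partial>G)
      = (\<integral>s. indicator {..<t} s * (s - (t - pd)) + (1 - q) * pd * indicator {t} s \<partial>G)"
    by (intro Bochner_Integration.integral_cong) (auto simp: sd_def split: split_indicator)
  moreover have "\<dots> = L' + (1 - q) * m"
    using set_integrable_dist_on_diff[OF G, of "{..<t}" "t - pd"]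
    by (simp add: L'_def m_def set_lebesgue_integral_def set_integrable_def less_top[symmetric])
  ultimately show ?thesis
    using t balance by (intro exI[of _ "t - pd"] exI[of _ sd]) auto
qed

lemma full_disclosure_equilibrium:
  assumes G: "dist_on a b G" and "pd \<le> 0" and "pt \<le> option_value G (a + pd)"
  shows "\<exists>sd. equilibrium a b F G pt pd 1 sd a \<and> revenue G pt pd 1 sd = pt + pd"
proof -
  interpret real_distribution G using G by (rule dist_on_real_distribution)
  define sd where "sd s = (if a + pd \<le> s then 1 else 0 :: real)" for s
  have rule: "disclosure_rule pd a sd"
    unfolding disclosure_rule_def sd_def by auto
  have "AE s in G. sd s = 1"
    using AE_dist_on[OF G] by eventually_elim (use \<open>pd \<le> 0\<close> in \<open>simp add: sd_def\<close>)
  then have "(\<integral>s. sd s \<partial>G) = 1" "(\<integral>s. 1 - sd s \<partial>G) = 0"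
    by (simp_all add: integral_cong_AE[where g = "\<lambda>_. 1"] integral_cong_AE[where g = "\<lambda>_. 0"]
        sd_def prob_space[simplified])
  then show ?thesis
    using rule assms dist_on_le[OF G]
    by (intro exI[of _ sd]) (simp add: equilibrium_iff[OF G] revenue_def)
qed

lemma no_testing_equilibrium:
  assumes G: "dist_on a b G" and "(\<integral>x. x \<partial>F) \<in> {a..b}"
    and "option_value G ((\<integral>x. x \<partial>F) + pd) \<le> pt"
  shows "\<exists>sd. equilibrium a b F G pt pd 0 sd (\<integral>x. x \<partial>F) \<and> revenue G pt pd 0 sd = 0"
proof -
  define sd where "sd s = (if (\<integral>x. x \<partial>F) + pd < s then 1 else 0 :: real)" for s
  have "disclosure_rule pd (\<integral>x. x \<partial>F) sd"
    unfolding disclosure_rule_def sd_def by auto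
  then show ?thesis
    using assms by (intro exI[of _ sd]) (simp add: equilibrium_iff[OF G] revenue_def)
qed

lemma no_disclosure_equilibrium:
  assumes G: "dist_on a b G" and mean: "(\<integral>x. x \<partial>G) = (\<integral>x. x \<partial>F)"
    and "option_value G ((\<integral>x. x \<partial>F) + pd) = 0" and "pt \<le> 0"
  shows "\<exists>sd. equilibrium a b F G pt pd 1 sd (\<integral>x. x \<partial>F) \<and> revenue G pt pd 1 sd = pt"
proof -
  interpret real_distribution G using G by (rule dist_on_real_distribution)
  define \<mu> where "\<mu> = (\<integral>x. x \<partial>F)"
  define sd where "sd s = (if \<mu> + pd < s then 1 else 0 :: real)" for s
  have rule: "disclosure_rule pd \<mu> sd"
    unfolding disclosure_rule_def sd_def by auto
  have sd0: "AE s in G. sd s = 0"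
    using AE_le_if_option_value_eq_0[OF G assms(3)] by eventually_elim (simp add: sd_def \<mu>_def)
  then have "(\<integral>s. sd s \<partial>G) = 0"
    by (simp add: integral_cong_AE[where g = "\<lambda>_. 0"] sd_def)
  moreover have "(\<integral>s. (1 - sd s) * (s - \<mu>) \<partial>G) = (\<integral>s. s - \<mu> \<partial>G)"
    using sd0 by (intro integral_cong_AE) (auto simp: sd_def elim: eventually_mono)
  moreover have "(\<integral>s. s - \<mu> \<partial>G) = 0"
    using integrable_dist_on_id[OF G] mean by (simp add: \<mu>_def prob_space[simplified])
  moreover have "\<mu> \<in> {a..b}"
    using mean_dist_on[OF G] mean by (simp add: \<mu>_def)
  ultimately show ?thesis
    using rule assms(3,4) unfolding \<mu>_def
    by (intro exI[of _ sd]) (simp add: equilibrium_iff[OF G] revenue_def)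
qed

lemma full_testing_equilibrium:
  assumes G: "dist_on a b G" and "0 \<le> pd" and "pt \<le> 0"
  shows "\<exists>sd beta. equilibrium a b F G pt pd 1 sd beta"
proof -
  obtain beta sd where "beta \<in> {a..b}" "disclosure_rule pd beta sd"
    "(\<integral>s. (1 - sd s) * (s - beta) \<partial>G) = 0"
    using disclosure_fixed_point[OF G \<open>0 \<le> pd\<close>] by blast
  then have "equilibrium a b F G pt pd 1 sd beta"
    using \<open>pt \<le> 0\<close> option_value_nonneg[of G "beta + pd"]
    by (simp add: equilibrium_iff[OF G])
  then show ?thesis by blast
qed

lemma revenue_lower_bound:
  assumes G: "dist_on a b G" and eq: "equilibrium a b F G pt pd st sd beta"
  shows "- (\<bar>pt\<bar> + \<bar>pd\<bar>) \<le> revenue G pt pd st sd"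
proof -
  have st: "st \<in> {0..1}" and rule: "disclosure_rule pd beta sd"
    using eq by (auto simp: equilibrium_iff[OF G])
  interpret real_distribution G using G by (rule dist_on_real_distribution)
  have "integrable G sd"
    using rule by (intro integrable_dist_on[OF G, where C = 1]) (auto simp: disclosure_rule_def)
  then have "0 \<le> (\<integral>s. sd s \<partial>G)" "(\<integral>s. sd s \<partial>G) \<le> 1"
    using rule by (auto simp: disclosure_rule_def intro!: integral_nonneg_AE integral_le_const)
  then have "\<bar>pd * (\<integral>s. sd s \<partial>G)\<bar> \<le> \<bar>pd\<bar>"
    by (simp add: abs_mult mult_left_le)
  then have "\<bar>pt + pd * (\<integral>s. sd s \<partial>G)\<bar> \<le> \<bar>pt\<bar> + \<bar>pd\<bar>"
    by linarith
  moreover have "\<bar>st * (pt + pd * (\<integral>s. sd s \<partial>G))\<bar> \<le> \<bar>pt + pd * (\<integral>s. sd s \<partial>G)\<bar>"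
    using st by (simp add: abs_mult mult_left_le_one_le)
  ultimately show ?thesis
    unfolding revenue_def by linarith
qed

lemma R_le_revenue:
  assumes "dist_on a b G" and "equilibrium a b F G pt pd st sd beta"
  shows "R a b F G pt pd \<le> revenue G pt pd st sd"
  unfolding R_def using assms revenue_lower_bound[OF assms(1)]
  by (intro cInf_lower bdd_belowI[where m = "- (\<bar>pt\<bar> + \<bar>pd\<bar>)"]) blast+

lemma R_pure_test_fee:
  assumes H: "dist_on a b H" and mean: "(\<integral>x. x \<partial>H) = (\<integral>x. x \<partial>F)"
    and "0 < c" and "c < option_value H (\<integral>x. x \<partial>F)"
  shows "R a b F H c 0 = c"
proof -
  have "a \<le> (\<integral>x. x \<partial>F)"
    using mean_dist_on[OF H] mean by simp
  then have "c \<le> option_value H a"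
    using assms(4) option_value_antimono[OF H, of a "\<integral>x. x \<partial>F"] by simp
  then obtain sd where "equilibrium a b F H c 0 1 sd a" "revenue H c 0 1 sd = c"
    using full_disclosure_equilibrium[OF H, of 0 c F] by auto
  then have "c \<in> {revenue H c 0 st sd | st sd beta. equilibrium a b F H c 0 st sd beta}"
    by (intro CollectI exI[of _ 1] exI[of _ sd] exI[of _ a]) simp
  moreover have "st = 1" if "equilibrium a b F H c 0 st sd' beta" for st sd' beta
    using equilibrium_full_testing[OF H mean _ _ that] assms(4) by simp
  then have "{revenue H c 0 st sd | st sd beta. equilibrium a b F H c 0 st sd beta} \<subseteq> {c}"
    by (auto simp: revenue_def)
  ultimately have "{revenue H c 0 st sd | st sd beta. equilibrium a b F H c 0 st sd beta} = {c}"
    by blast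
  then show ?thesis
    by (simp add: R_def)
qed

lemma R_le_R_without_test_fee:
  assumes G: "dist_on a b G" and mean: "(\<integral>x. x \<partial>G) = (\<integral>x. x \<partial>F)"
    and "0 \<le> pd" and "pt \<le> 0" and "0 < option_value G ((\<integral>x. x \<partial>F) + pd)"
  shows "R a b F G pt pd \<le> R a b F G 0 pd + pt"
proof -
  define Y where "Y = {revenue G 0 pd st sd | st sd beta. equilibrium a b F G 0 pd st sd beta}"
  have "Y \<noteq> {}"
    using full_testing_equilibrium[OF G \<open>0 \<le> pd\<close>, of 0 F] unfolding Y_def by blast
  moreover have "R a b F G pt pd - pt \<le> y" if "y \<in> Y" for y
  proof -
    obtain st sd beta
      where y: "y = revenue G 0 pd st sd" and eq: "equilibrium a b F G 0 pd st sd beta"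
      using \<open>y \<in> Y\<close> unfolding Y_def by blast
    have "st = 1"
      using equilibrium_full_testing[OF G mean \<open>0 \<le> pd\<close> assms(5) eq] .
    then have "equilibrium a b F G pt pd st sd beta"
      using eq \<open>pt \<le> 0\<close> option_value_nonneg[of G "beta + pd"] by (simp add: equilibrium_iff[OF G])
    then show ?thesis
      using R_le_revenue[OF G] y \<open>st = 1\<close> by (fastforce simp: revenue_def)
  qed
  ultimately have "R a b F G pt pd - pt \<le> Inf Y"
    by (rule cInf_greatest)
  then show ?thesis
    unfolding R_def Y_def by simp
qed

lemma exists_better_nonneg_fees:
  assumes F: "asset_dist a b F" and G: "MPC a b F G" and R: "R a b F G pt pd \<le> r"
    and r: "r \<le> 0 \<or> r < option_value G (\<integral>x. x \<partial>F)"
  shows "\<exists>G' pt' pd'. MPC a b F G' \<and> pt' \<ge> 0 \<and> pd' \<ge> 0 \<and> R a b F G pt pd < R a b F G' pt' pd'"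
proof -
  have dF: "dist_on a b F" and dG: "dist_on a b G"
    using F G by (auto simp: asset_dist_def MPC_def)
  show ?thesis
  proof (cases "r \<le> 0")
    case True
    define c where "c = option_value F (\<integral>x. x \<partial>F) / 2"
    have "0 < c" "c < option_value F (\<integral>x. x \<partial>F)"
      using option_value_mean_pos[OF F] by (simp_all add: c_def)
    then have "R a b F G pt pd < R a b F F c 0"
      using R True R_pure_test_fee[OF dF refl] by simp
    then show ?thesis
      using MPC_refl[OF dF] \<open>0 < c\<close> by (intro exI[of _ F] exI[of _ c] exI[of _ 0]) auto
  next
    case False
    define c where "c = (r + option_value G (\<integral>x. x \<partial>F)) / 2"
    have "r < c" "0 < c" "c < option_value G (\<integral>x. x \<partial>F)"
      using False r by (simp_all add: c_def)
    then have "R a b F G pt pd < R a b F G c 0"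
      using R R_pure_test_fee[OF dG MPC_mean[OF dF G]] by simp
    then show ?thesis
      using G \<open>0 < c\<close> by (intro exI[of _ G] exI[of _ c] exI[of _ 0]) auto
  qed
qed

theorem lemma2:
  fixes a b :: real and F G :: "real measure" and pt pd :: real
  assumes "asset_dist a b F"
    and "MPC a b F G"
    and "pd < 0 \<or> pt < 0"
  shows "\<exists>G' pt' pd'. MPC a b F G' \<and> pt' \<ge> 0 \<and> pd' \<ge> 0 \<and>
           R a b F G pt pd < R a b F G' pt' pd'"
proof -
  let ?\<mu> = "\<integral>x. x \<partial>F"
  have dF: "dist_on a b F" and dG: "dist_on a b G"
    using assms(1,2) by (auto simp: asset_dist_def MPC_def)
  have mean: "(\<integral>x. x \<partial>G) = ?\<mu>" and "?\<mu> \<in> {a..b}"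
    using MPC_mean[OF dF assms(2)] mean_dist_on[OF dF] by simp_all
  note better = exists_better_nonneg_fees[OF assms(1,2)]
  consider (no_test) "pd < 0" "option_value G (?\<mu> + pd) \<le> pt"
    | (disclose) "pd < 0" "pt < option_value G (?\<mu> + pd)"
    | (conceal) "0 \<le> pd" "pt < 0" "option_value G (?\<mu> + pd) = 0"
    | (lower_fee) "0 \<le> pd" "pt < 0" "0 < option_value G (?\<mu> + pd)"
    using assms(3) option_value_nonneg[of G "?\<mu> + pd"] by linarith
  then show ?thesis
  proof cases
    case no_test
    then have "R a b F G pt pd \<le> 0"
      using no_testing_equilibrium[OF dG \<open>?\<mu> \<in> {a..b}\<close>] R_le_revenue[OF dG] by fastforce
    then show ?thesis
      by (rule better) simp
  next
    case disclose
    then have "pt \<le> option_value G (a + pd)" and "pt + pd < option_value G ?\<mu>"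
      using option_value_antimono[OF dG, of "a + pd" "?\<mu> + pd"]
        option_value_le_add_diff[OF dG, of "?\<mu> + pd" ?\<mu>] \<open>?\<mu> \<in> {a..b}\<close> by auto
    then have "R a b F G pt pd \<le> pt + pd"
      using full_disclosure_equilibrium[OF dG less_imp_le[OF \<open>pd < 0\<close>]] R_le_revenue[OF dG]
      by fastforce
    then show ?thesis
      by (rule better) (use \<open>pt + pd < option_value G ?\<mu>\<close> in simp)
  next
    case conceal
    then have "R a b F G pt pd \<le> pt"
      using no_disclosure_equilibrium[OF dG mean _ less_imp_le] R_le_revenue[OF dG] by fastforce
    then show ?thesis
      by (rule better) (use \<open>pt < 0\<close> in simp)
  next
    case lower_fee
    then have "R a b F G pt pd < R a b F G 0 pd"
      using R_le_R_without_test_fee[OF dG mean, of pd pt] by simp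
    then show ?thesis
      using assms(2) \<open>0 \<le> pd\<close> by blast
  qed
qed

end
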